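(* Let $d\ge 1$, let $\eta\in\mathcal{X}=\mathbb{N}^{\mathbb{Z}^d}$, and let $T,T'$ be two legal toppling procedures which are both finite for the initial configuration $\eta$. Then: 1. If $T$ is stabilizing for $\eta$, then $T'\preceq_\eta T$, i.e. $T'(\infty,x,\eta)\le T(\infty,x,\eta)$ for all $x\in\mathbb{Z}^d$. 2. If $T$ and $T'$ are both stabilizing for $\eta$, then $T'(\infty,x,\eta)=T(\infty,x,\eta)$ for all $x\in\mathbb{Z}^d$; in particular, for stabilizable $\eta$ the limit configuration $\eta_\infty=\eta-\Delta T(\infty,\cdot,\eta)$ does not depend on the choice of stabilizing legal toppling procedure. 3. If $\eta$ is stabilizable, then there does not exist a legal toppling procedure that is not finite for $\eta$. 4. If $T$ is stabilizing for $\eta$, then there is at least one site $x\in\mathbb{Z}^d$ with $T(\infty,x,\eta)=0$.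
   Context: Let $\mathcal{X}=\mathbb{N}^{\mathbb{Z}^d}$ be the set of height configurations; a configuration $\eta$ is stable if $\eta(x)\le 2d-1$ for all $x$, and site $x$ is unstable if $\eta(x)\ge 2d$. The toppling matrix is $\Delta_{x,y}=2d\mathbf{1}_{x=y}-\mathbf{1}_{|x-y|=1}$, and for $n:\mathbb{Z}^d\to\mathbb{N}$ we write $(\Delta n)(x)=\sum_y\Delta_{x,y}n(y)$. A toppling procedure is a measurable map $T:[0,\infty)\times\mathbb{Z}^d\times\mathcal{X}\to\mathbb{N}$ such that for every $\eta\in\mathcal{X}$: (a) $T(0,x,\eta)=0$ for all $x$; (b) for each $x$, $t\mapsto T(t,x,\eta)$ is right-continuous, nondecreasing, with jumps of size at most one; (c) for each $x$, there are finitely many jumps at $x$ in every finite time interval; (d) there is no infinite chain of topplings at sites $x_1,x_2,\dots$ occurring at times $t_1>t_2>\cdots$ with $x_{i+1}$ a neighbor of $x_i$ for all $i$. ($T(t,x,\eta)$ is the number of topplings at $x$ during $[0,t]$; site $x$ topples at time $t$ if $T(t-,x,\eta)<T(t,x,\eta)$.) The configuration at time $t$ is $\eta_t=\eta-\Delta T(t,\cdot,\eta)$. $T$ is legal if for all $\eta$, all $t>0$ and all $x$ toppling at time $t$, $\eta_{t-}(x)\ge 2d$. $T$ is finite for $\eta$ if $T(\infty,x,\eta):=\lim_{t\to\infty}T(t,x,\eta)<\infty$ for all $x$. A legal $T$ is stabilizing for $\eta$ if it is finite for $\eta$ and $\eta_\infty:=\eta-\Delta T(\infty,\cdot,\eta)$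 is stable. A configuration $\eta$ is stabilizable if there exists a legal toppling procedure that is stabilizing for $\eta$. *)

theory Defs
  imports "HOL-Analysis.Analysis"
begin

text \<open>Sites of the lattice Z^d are functions from a finite index type 'd to int;
  d = CARD('d) >= 1. Height configurations are maps site => nat.
  Toppling procedures are maps real => site => config => nat (only times t >= 0 matter).\<close>

type_synonym 'd site = "'d \<Rightarrow> int"
type_synonym 'd config = "'d site \<Rightarrow> nat"
type_synonym 'd procedure = "real \<Rightarrow> 'd site \<Rightarrow> 'd config \<Rightarrow> nat"

definition nbr :: "'d::finite site \<Rightarrow> 'd site \<Rightarrow> bool" where
  "nbr x y \<longleftrightarrow> (\<Sum>i\<in>UNIV. \<bar>x i - y i\<bar>) = 1"

definition toppling_op :: "('d::finite site \<Rightarrow> real) \<Rightarrow> 'd site \<Rightarrow> real" where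
  "toppling_op n x = 2 * real CARD('d) * n x - (\<Sum>y\<in>{y. nbr x y}. n y)"

definition Tleft :: "'d procedure \<Rightarrow> 'd config \<Rightarrow> real \<Rightarrow> 'd site \<Rightarrow> real" where
  "Tleft T \<eta> t x = Lim (at_left t) (\<lambda>s. real (T s x \<eta>))"

definition topples :: "'d procedure \<Rightarrow> 'd config \<Rightarrow> real \<Rightarrow> 'd site \<Rightarrow> bool" where
  "topples T \<eta> t x \<longleftrightarrow> t > 0 \<and> Tleft T \<eta> t x < real (T t x \<eta>)"

definition proc_space :: "(real \<times> 'd site \<times> 'd config) measure" where
  "proc_space = restrict_space borel {0..} \<Otimes>\<^sub>M (count_space UNIV \<Otimes>\<^sub>M
      (\<Pi>\<^sub>M x\<in>UNIV. count_space UNIV))"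

definition toppling_procedure :: "'d::finite procedure \<Rightarrow> bool" where
  "toppling_procedure T \<longleftrightarrow>
     (\<lambda>(t, x, \<eta>). T t x \<eta>) \<in> measurable proc_space (count_space UNIV) \<and>
     (\<forall>\<eta>.
       (\<forall>x. T 0 x \<eta> = 0) \<and>
       (\<forall>x. \<forall>s t. 0 \<le> s \<longrightarrow> s \<le> t \<longrightarrow> T s x \<eta> \<le> T t x \<eta>) \<and>
       (\<forall>x. \<forall>t\<ge>0. continuous (at_right t) (\<lambda>s. real (T s x \<eta>))) \<and>
       (\<forall>x. \<forall>t>0. real (T t x \<eta>) - Tleft T \<eta> t x \<le> 1) \<and>
       (\<forall>x. \<forall>a b. finite {t\<in>{a..b}. topples T \<eta> t x}) \<and>
       \<not> (\<exists>xs :: nat \<Rightarrow> 'd site. \<exists>ts :: nat \<Rightarrow> real.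
            (\<forall>i. topples T \<eta> (ts i) (xs i)) \<and> (\<forall>i. ts (Suc i) < ts i) \<and>
            (\<forall>i. nbr (xs i) (xs (Suc i)))))"

definition conf_left :: "'d::finite procedure \<Rightarrow> 'd config \<Rightarrow> real \<Rightarrow> 'd site \<Rightarrow> real" where
  "conf_left T \<eta> t x = real (\<eta> x) - toppling_op (Tleft T \<eta> t) x"

definition legal :: "'d::finite procedure \<Rightarrow> bool" where
  "legal T \<longleftrightarrow> (\<forall>\<eta> t x. t > 0 \<longrightarrow> topples T \<eta> t x \<longrightarrow>
                        conf_left T \<eta> t x \<ge> 2 * real CARD('d))"

definition finite_for :: "'d procedure \<Rightarrow> 'd config \<Rightarrow> bool" where
  "finite_for T \<eta> \<longleftrightarrow> (\<forall>x. \<exists>L::real. ((\<lambda>t. real (T t x \<eta>)) \<longlongrightarrow> L) at_top)"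

definition Tinf :: "'d procedure \<Rightarrow> 'd config \<Rightarrow> 'd site \<Rightarrow> real" where
  "Tinf T \<eta> x = Lim at_top (\<lambda>t. real (T t x \<eta>))"

definition conf_inf :: "'d::finite procedure \<Rightarrow> 'd config \<Rightarrow> 'd site \<Rightarrow> real" where
  "conf_inf T \<eta> x = real (\<eta> x) - toppling_op (Tinf T \<eta>) x"

definition stable :: "('d::finite site \<Rightarrow> real) \<Rightarrow> bool" where
  "stable \<xi> \<longleftrightarrow> (\<forall>x. \<xi> x \<le> 2 * real CARD('d) - 1)"

definition stabilizing :: "'d::finite procedure \<Rightarrow> 'd config \<Rightarrow> bool" where
  "stabilizing T \<eta> \<longleftrightarrow> legal T \<and> finite_for T \<eta> \<and> stable (conf_inf T \<eta>)"

definition stabilizable :: "'d::finite config \<Rightarrow> bool" where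
  "stabilizable \<eta> \<longleftrightarrow> (\<exists>T. toppling_procedure T \<and> legal T \<and> stabilizing T \<eta>)"

end

theory Submission
  imports Defs
begin

text \<open>A legal procedure never topples a site more often than \<open>N\<close> times, for any odometer \<open>N\<close>
  such that \<open>\<eta> - \<Delta>N\<close> is stable: at the first toppling exceeding \<open>N\<close>, legality there together
  with stability of \<open>\<eta> - \<Delta>N\<close> forces some neighbour to have exceeded \<open>N\<close> already; iterating
  yields an infinite chain of neighbouring topplings going backwards in time, which condition (d)
  forbids. Applied to the final odometer of a stabilizing procedure this gives parts 1 to 3. For
  part 4 the same argument runs with last instead of first topplings: if every site toppled, then
  at the last toppling of any site some neighbour must already have completed its own.\<close>

lemma toppling_procedure_zero: "toppling_procedure T \<Longrightarrow> T 0 x \<eta> = 0"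
  unfolding toppling_procedure_def by blast

lemma toppling_procedure_mono:
  "toppling_procedure T \<Longrightarrow> 0 \<le> s \<Longrightarrow> s \<le> t \<Longrightarrow> T s x \<eta> \<le> T t x \<eta>"
  unfolding toppling_procedure_def by blast

lemma toppling_procedure_right_continuous:
  "toppling_procedure T \<Longrightarrow> 0 \<le> t \<Longrightarrow> continuous (at_right t) (\<lambda>s. real (T s x \<eta>))"
  unfolding toppling_procedure_def by blast

lemma toppling_procedure_jump_le_1:
  "toppling_procedure T \<Longrightarrow> 0 < t \<Longrightarrow> real (T t x \<eta>) - Tleft T \<eta> t x \<le> 1"
  unfolding toppling_procedure_def by blast

lemma toppling_procedure_no_backward_chain:
  "toppling_procedure T \<Longrightarrow> (\<And>i. topples T \<eta> (ts i) (xs i)) \<Longrightarrow> (\<And>i. ts (Suc i) < ts i)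
    \<Longrightarrow> (\<And>i. nbr (xs i) (xs (Suc i))) \<Longrightarrow> False"
  unfolding toppling_procedure_def by blast

subsection \<open>Monotone and right-continuous counting functions\<close>

lemma mono_nat_eventually_const_at_left:
  fixes g :: "real \<Rightarrow> nat"
  assumes mono: "\<And>s t. 0 \<le> s \<Longrightarrow> s \<le> t \<Longrightarrow> g s \<le> g t" and "0 < t"
  obtains s0 where "0 \<le> s0" "s0 < t" "\<And>s. s0 \<le> s \<Longrightarrow> s < t \<Longrightarrow> g s = g s0"
proof -
  let ?V = "g ` {0..<t}"
  have "finite ?V"
    by (rule finite_subset[of _ "{..g t}"]) (use mono in force)+
  moreover have "?V \<noteq> {}" using \<open>0 < t\<close> by auto
  ultimately obtain s0 where s0: "s0 \<in> {0..<t}" "g s0 = Max ?V"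
    by (metis (no_types, lifting) Max_in imageE)
  have const: "g s = g s0" if "s0 \<le> s" "s < t" for s
  proof (rule antisym)
    show "g s \<le> g s0" using that s0 \<open>finite ?V\<close> by (simp add: Max_ge)
    show "g s0 \<le> g s" using that s0 by (intro mono) auto
  qed
  show ?thesis using s0 by (intro that[OF _ _ const]) auto
qed

lemma bounded_mono_nat_eventually_const:
  fixes g :: "real \<Rightarrow> nat"
  assumes mono: "\<And>s t. 0 \<le> s \<Longrightarrow> s \<le> t \<Longrightarrow> g s \<le> g t"
    and bounded: "\<And>t. 0 \<le> t \<Longrightarrow> g t \<le> B"
  obtains t0 where "0 \<le> t0" "\<And>t. t0 \<le> t \<Longrightarrow> g t = g t0"
proof -
  let ?V = "g ` {0..}"
  have "finite ?V"
    by (rule finite_subset[of _ "{..B}"]) (use bounded in force)+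
  moreover have "?V \<noteq> {}" by auto
  ultimately obtain t0 where t0: "t0 \<in> {0..}" "g t0 = Max ?V"
    by (metis (no_types, lifting) Max_in imageE)
  have const: "g t = g t0" if "t0 \<le> t" for t
  proof (rule antisym)
    show "g t \<le> g t0" using that t0 \<open>finite ?V\<close> by (simp add: Max_ge)
    show "g t0 \<le> g t" using that t0 by (intro mono) auto
  qed
  show ?thesis using t0 by (intro that[OF _ const]) auto
qed

lemma right_continuous_nat_eventually_const:
  fixes g :: "real \<Rightarrow> nat"
  assumes "continuous (at_right t) (\<lambda>r. real (g r))"
  shows "eventually (\<lambda>r. g r = g t) (at_right t)"
proof -
  have "((\<lambda>r. real (g r)) \<longlongrightarrow> real (g t)) (at_right t)"
    using assms by (simp add: continuous_within)
  then have "eventually (\<lambda>r. dist (real (g r)) (real (g t)) < 1) (at_right t)"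
    by (rule tendstoD) simp
  then show ?thesis
    by eventually_elim (simp add: dist_real_def)
qed

lemma first_passage_time:
  fixes g :: "real \<Rightarrow> nat"
  assumes right_cont: "\<And>t. 0 \<le> t \<Longrightarrow> continuous (at_right t) (\<lambda>r. real (g r))"
    and "0 \<le> s" "m \<le> g s"
  obtains L where "0 \<le> L" "L \<le> s" "m \<le> g L" "\<And>r. 0 \<le> r \<Longrightarrow> r < L \<Longrightarrow> g r < m"
proof -
  define A where "A = {r. 0 \<le> r \<and> m \<le> g r}"
  define L where "L = Inf A"
  have "s \<in> A" using assms unfolding A_def by auto
  have bdd: "bdd_below A" unfolding A_def by (auto intro: bdd_belowI[of _ 0])
  have "L \<le> s" unfolding L_def using \<open>s \<in> A\<close> bdd by (rule cInf_lower)
  have "0 \<le> L" unfolding L_def using \<open>s \<in> A\<close> by (intro cInf_greatest) (auto simp: A_def)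
  have below: "g r < m" if "0 \<le> r" "r < L" for r
    using that cInf_lower[OF _ bdd, of r] unfolding A_def L_def by force
  have "m \<le> g L"
  proof (rule ccontr)
    assume "\<not> m \<le> g L"
    obtain b where "L < b" and const: "\<And>r. L < r \<Longrightarrow> r < b \<Longrightarrow> g r = g L"
      using right_continuous_nat_eventually_const[OF right_cont[OF \<open>0 \<le> L\<close>]]
      unfolding eventually_at_right_field by blast
    obtain a where "a \<in> A" "a < b"
      using cInf_lessD[of A b] \<open>s \<in> A\<close> \<open>L < b\<close> unfolding L_def by blast
    moreover have "L \<le> a" unfolding L_def using \<open>a \<in> A\<close> bdd by (rule cInf_lower)
    ultimately show False
      using const[of a] \<open>\<not> m \<le> g L\<close> unfolding A_def by (cases "a = L") auto
  qed
  with \<open>0 \<le> L\<close> \<open>L \<le> s\<close> show ?thesis using below by (rule that)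
qed

lemma Tleft_eq_earlier_count:
  assumes tp: "toppling_procedure T" and "0 < t"
  obtains s where "0 \<le> s" "s < t" "Tleft T \<eta> t x = real (T s x \<eta>)"
proof -
  obtain s where s: "0 \<le> s" "s < t" and const: "\<And>r. s \<le> r \<Longrightarrow> r < t \<Longrightarrow> T r x \<eta> = T s x \<eta>"
    using mono_nat_eventually_const_at_left[of "\<lambda>r. T r x \<eta>" t]
      toppling_procedure_mono[OF tp] \<open>0 < t\<close> by blast
  have "eventually (\<lambda>r. real (T r x \<eta>) = real (T s x \<eta>)) (at_left t)"
    using eventually_at_left_real[OF \<open>s < t\<close>]
    by eventually_elim (metis const greaterThanLessThan_iff less_imp_le)
  then have "((\<lambda>r. real (T r x \<eta>)) \<longlongrightarrow> real (T s x \<eta>)) (at_left t)"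
    by (rule tendsto_eventually)
  then have "Tleft T \<eta> t x = real (T s x \<eta>)"
    unfolding Tleft_def by (rule tendsto_Lim[OF trivial_limit_at_left_real])
  with s show ?thesis by (rule that)
qed

lemma toppling_at_level:
  assumes tp: "toppling_procedure T" and "0 \<le> s" "1 \<le> m" "m \<le> T s y \<eta>"
  obtains L where "0 < L" "L \<le> s" "topples T \<eta> L y" "Tleft T \<eta> L y = real m - 1"
proof -
  obtain L where L: "0 \<le> L" "L \<le> s" "m \<le> T L y \<eta>"
    and below: "\<And>r. 0 \<le> r \<Longrightarrow> r < L \<Longrightarrow> T r y \<eta> < m"
    using first_passage_time[of "\<lambda>r. T r y \<eta>" s m] assms
      toppling_procedure_right_continuous[OF tp] by blast
  have "L \<noteq> 0" using L toppling_procedure_zero[OF tp] \<open>1 \<le> m\<close> by fastforce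
  with L have "0 < L" by simp
  obtain r where "0 \<le> r" "r < L" "Tleft T \<eta> L y = real (T r y \<eta>)"
    using Tleft_eq_earlier_count[OF tp \<open>0 < L\<close>] .
  moreover have "T r y \<eta> < m" using below \<open>0 \<le> r\<close> \<open>r < L\<close> .
  ultimately have le: "Tleft T \<eta> L y \<le> real m - 1" by linarith
  have "real (T L y \<eta>) - Tleft T \<eta> L y \<le> 1"
    using toppling_procedure_jump_le_1[OF tp \<open>0 < L\<close>] .
  with le L(3) have "Tleft T \<eta> L y = real m - 1" by linarith
  moreover have "topples T \<eta> L y"
    unfolding topples_def using \<open>0 < L\<close> le L(3) by linarith
  ultimately show ?thesis using \<open>0 < L\<close> \<open>L \<le> s\<close> that by blast
qed

subsection \<open>The lattice Laplacian\<close>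

lemma nbr_coordinate_bound: "nbr x y \<Longrightarrow> \<bar>x i - y i\<bar> \<le> 1"
  unfolding nbr_def using member_le_sum[of i UNIV "\<lambda>j. \<bar>x j - y j\<bar>"] by simp

lemma finite_nbr: "finite {y. nbr (x::'d::finite site) y}"
proof (rule finite_subset)
  show "{y. nbr x y} \<subseteq> (\<Pi>\<^sub>E i\<in>UNIV. {x i - 1..x i + 1})"
  proof
    fix y assume "y \<in> {y. nbr x y}"
    then have "y i \<in> {x i - 1..x i + 1}" for i
      using nbr_coordinate_bound[of x y i] by (simp add: abs_le_iff)
    then show "y \<in> (\<Pi>\<^sub>E i\<in>UNIV. {x i - 1..x i + 1})" by (simp add: PiE_UNIV_domain)
  qed
qed (rule finite_PiE, auto)

lemma card_nbr_ge: "2 * CARD('d) \<le> card {y. nbr (x::'d::finite site) y}"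
proof -
  define step where "step = (\<lambda>(i::'d, c::int). x(i := x i + c))"
  have "inj_on step (UNIV \<times> {-1, 1})"
  proof (rule inj_onI, clarify)
    fix i j and c d :: int
    assume "c \<in> {-1, 1}" "d \<in> {-1, 1}" and eq: "step (i, c) = step (j, d)"
    have "step (i, c) i = step (j, d) i" using eq by simp
    then have *: "x i + c = (if i = j then x i + d else x i)" by (simp add: step_def)
    with \<open>c \<in> {-1, 1}\<close> have "i = j" by (cases "i = j") auto
    with * show "i = j \<and> c = d" by simp
  qed
  moreover have "step ` (UNIV \<times> {-1, 1}) \<subseteq> {y. nbr x y}"
  proof clarify
    fix i and c :: int assume "c \<in> {-1, 1}"
    then have "(\<Sum>j\<in>UNIV. \<bar>x j - step (i, c) j\<bar>) = (\<Sum>j\<in>UNIV. if j = i then 1 else 0)"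
      by (intro sum.cong) (auto simp: step_def)
    then show "nbr x (step (i, c))" by (simp add: nbr_def)
  qed
  ultimately have "card ((UNIV :: 'd set) \<times> {-1, 1::int}) \<le> card {y. nbr x y}"
    using finite_nbr by (rule card_inj_on_le)
  then show ?thesis by (simp add: card_cartesian_product)
qed

lemma toppling_op_diff:
  "toppling_op (\<lambda>y. u y - v y) x = toppling_op u x - toppling_op v x"
  unfolding toppling_op_def by (simp add: sum_subtractf algebra_simps)

lemma toppling_op_nonpos:
  fixes w :: "'d::finite site \<Rightarrow> real"
  assumes "0 \<le> k" "w x \<le> k" "\<And>y. nbr x y \<Longrightarrow> k \<le> w y"
  shows "toppling_op w x \<le> 0"
proof -
  have "2 * real CARD('d) * w x \<le> real (2 * CARD('d)) * k"
    using assms(2) by (simp add: mult_left_mono)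
  also have "\<dots> \<le> real (card {y. nbr x y}) * k"
    using card_nbr_ge[of x] assms(1) by (intro mult_right_mono) simp_all
  also have "\<dots> = (\<Sum>y\<in>{y. nbr x y}. k)" by simp
  also have "\<dots> \<le> (\<Sum>y\<in>{y. nbr x y}. w y)"
    using assms(3) by (intro sum_mono) simp
  finally show ?thesis unfolding toppling_op_def by simp
qed

subsection \<open>Least action\<close>

lemma no_backward_closed_topplings:
  assumes tp: "toppling_procedure T"
    and topples: "\<And>x t. P x t \<Longrightarrow> topples T \<eta> t x"
    and backward: "\<And>x t. P x t \<Longrightarrow> \<exists>y s. nbr x y \<and> s < t \<and> P y s"
  shows "\<not> P x t"
proof
  assume "P x t"
  let ?P = "\<lambda>(n::nat) p. P (fst p) (snd p)"
  let ?Q = "\<lambda>(n::nat) p q. nbr (fst p) (fst q) \<and> snd q < snd p"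
  have start: "\<exists>p. ?P 0 p" using \<open>P x t\<close> by auto
  have step: "\<exists>q. ?P (Suc n) q \<and> ?Q n p q" if Pp: "?P n p" for n p
  proof -
    obtain y s where "nbr (fst p) y" "s < snd p" "P y s" using backward[OF Pp] by blast
    then show ?thesis by (intro exI[of _ "(y, s)"]) simp
  qed
  obtain f where f: "\<forall>n. ?P n (f n) \<and> ?Q n (f n) (f (Suc n))"
    using dependent_nat_choice[of ?P ?Q, OF start step] by blast
  show False
  proof (rule toppling_procedure_no_backward_chain[OF tp])
    fix i
    show "topples T \<eta> (snd (f i)) (fst (f i))" using f topples by blast
    show "snd (f (Suc i)) < snd (f i)" using f by blast
    show "nbr (fst (f i)) (fst (f (Suc i)))" using f by blast
  qed
qed

lemma never_reaches_level:
  fixes m :: "'d::finite site \<Rightarrow> nat"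
  assumes tp: "toppling_procedure T" and pos: "\<And>x. 1 \<le> m x"
    and spread: "\<And>x L. 0 < L \<Longrightarrow> topples T \<eta> L x \<Longrightarrow> Tleft T \<eta> L x = real (m x) - 1
      \<Longrightarrow> \<exists>y. nbr x y \<and> real (m y) - 1 < Tleft T \<eta> L y"
    and "0 \<le> t"
  shows "T t x \<eta> < m x"
proof (rule ccontr)
  define P where "P y L \<longleftrightarrow> 0 < L \<and> topples T \<eta> L y \<and> Tleft T \<eta> L y = real (m y) - 1" for y L
  have reach: "\<exists>L\<le>s. P y L" if "0 \<le> s" "m y \<le> T s y \<eta>" for s y
    using toppling_at_level[OF tp that(1) pos that(2)] unfolding P_def by metis
  have backward: "\<exists>y s. nbr x y \<and> s < L \<and> P y s" if "P x L" for x L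
  proof -
    obtain y where "nbr x y" and y: "real (m y) - 1 < Tleft T \<eta> L y"
      using spread \<open>P x L\<close> unfolding P_def by blast
    obtain s where "0 \<le> s" "s < L" and "Tleft T \<eta> L y = real (T s y \<eta>)"
      using Tleft_eq_earlier_count[OF tp] \<open>P x L\<close> unfolding P_def by blast
    with y have "m y \<le> T s y \<eta>" by linarith
    then obtain L' where "L' \<le> s" "P y L'" using reach[OF \<open>0 \<le> s\<close>] by blast
    with \<open>nbr x y\<close> \<open>s < L\<close> show ?thesis by (intro exI[of _ y] exI[of _ L']) simp
  qed
  assume "\<not> T t x \<eta> < m x"
  with reach[OF \<open>0 \<le> t\<close>] obtain L where "P x L" by force
  moreover have "\<not> P x L"
    by (rule no_backward_closed_topplings[where \<eta> = \<eta>, OF tp _ backward]) (simp add: P_def)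
  ultimately show False by contradiction
qed

text \<open>Legality at \<open>x\<close> and stability of \<open>\<eta> - \<Delta>u\<close> give \<open>\<Delta>(u - T(L-)) > 0\<close> at \<open>x\<close>,
  which \<open>toppling_op_nonpos\<close> rules out unless some neighbour is ahead.\<close>

lemma legal_toppling_outpaces_neighbour:
  fixes u :: "'d::finite site \<Rightarrow> real"
  assumes "legal T" and stable: "stable (\<lambda>y. real (\<eta> y) - toppling_op u y)"
    and "0 \<le> k" "0 < L" "topples T \<eta> L x" and at_x: "Tleft T \<eta> L x = u x - k"
  shows "\<exists>y. nbr x y \<and> u y - k < Tleft T \<eta> L y"
proof (rule ccontr)
  assume "\<nexists>y. nbr x y \<and> u y - k < Tleft T \<eta> L y"
  then have "toppling_op (\<lambda>y. u y - Tleft T \<eta> L y) x \<le> 0"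
    using \<open>0 \<le> k\<close> at_x by (intro toppling_op_nonpos) auto
  moreover have "conf_left T \<eta> L x \<ge> 2 * real CARD('d)"
    using \<open>legal T\<close> \<open>0 < L\<close> \<open>topples T \<eta> L x\<close> unfolding legal_def by blast
  moreover have "real (\<eta> x) - toppling_op u x \<le> 2 * real CARD('d) - 1"
    using stable unfolding stable_def by blast
  ultimately show False
    unfolding toppling_op_diff conf_left_def by linarith
qed

theorem least_action:
  fixes N :: "'d::finite site \<Rightarrow> nat"
  assumes "toppling_procedure T" "legal T"
    and "stable (\<lambda>y. real (\<eta> y) - toppling_op (\<lambda>z. real (N z)) y)" and "0 \<le> t"
  shows "T t x \<eta> \<le> N x"
proof -
  have "T t x \<eta> < N x + 1"
  proof (rule never_reaches_level[OF assms(1) _ _ assms(4)])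
    fix y L assume "0 < L" "topples T \<eta> L y" "Tleft T \<eta> L y = real (N y + 1) - 1"
    then show "\<exists>z. nbr y z \<and> real (N z + 1) - 1 < Tleft T \<eta> L z"
      using legal_toppling_outpaces_neighbour[OF assms(2,3), of 0] by simp
  qed simp
  then show ?thesis by simp
qed

theorem legal_never_reaches_positive_stabilizer:
  fixes N :: "'d::finite site \<Rightarrow> nat"
  assumes "toppling_procedure T" "legal T"
    and "stable (\<lambda>y. real (\<eta> y) - toppling_op (\<lambda>z. real (N z)) y)"
    and pos: "\<And>y. 1 \<le> N y" and "0 \<le> t"
  shows "T t x \<eta> < N x"
proof (rule never_reaches_level[OF assms(1) pos _ assms(5)])
  fix y L assume "0 < L" "topples T \<eta> L y" "Tleft T \<eta> L y = real (N y) - 1"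
  then show "\<exists>z. nbr y z \<and> real (N z) - 1 < Tleft T \<eta> L z"
    using legal_toppling_outpaces_neighbour[OF assms(2,3), of 1] by simp
qed

lemma bounded_toppling_count_converges:
  assumes tp: "toppling_procedure T" and bounded: "\<And>t. 0 \<le> t \<Longrightarrow> T t x \<eta> \<le> B"
  obtains t0 where "0 \<le> t0" "((\<lambda>t. real (T t x \<eta>)) \<longlongrightarrow> real (T t0 x \<eta>)) at_top"
proof -
  obtain t0 where "0 \<le> t0" and const: "\<And>t. t0 \<le> t \<Longrightarrow> T t x \<eta> = T t0 x \<eta>"
    using bounded_mono_nat_eventually_const[of "\<lambda>t. T t x \<eta>"] toppling_procedure_mono[OF tp]
      bounded by blast
  have "eventually (\<lambda>t. real (T t x \<eta>) = real (T t0 x \<eta>)) at_top"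
    unfolding eventually_at_top_linorder using const by metis
  then have "((\<lambda>t. real (T t x \<eta>)) \<longlongrightarrow> real (T t0 x \<eta>)) at_top"
    by (rule tendsto_eventually)
  with \<open>0 \<le> t0\<close> show ?thesis by (rule that)
qed

lemma finite_for_iff_bounded:
  assumes tp: "toppling_procedure T"
  shows "finite_for T \<eta> \<longleftrightarrow> (\<forall>x. \<exists>B. \<forall>t\<ge>0. T t x \<eta> \<le> B)"
proof
  assume fin: "finite_for T \<eta>"
  show "\<forall>x. \<exists>B. \<forall>t\<ge>0. T t x \<eta> \<le> B"
  proof
    fix x
    obtain l where lim: "((\<lambda>t. real (T t x \<eta>)) \<longlongrightarrow> l) at_top"
      using fin unfolding finite_for_def by blast
    have "real (T t x \<eta>) \<le> l" if "0 \<le> t" for t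
    proof (rule tendsto_lowerbound[OF lim _ trivial_limit_at_top_linorder])
      have "\<forall>s\<ge>t. real (T t x \<eta>) \<le> real (T s x \<eta>)"
        using toppling_procedure_mono[OF tp \<open>0 \<le> t\<close>] by simp
      then show "eventually (\<lambda>s. real (T t x \<eta>) \<le> real (T s x \<eta>)) at_top"
        unfolding eventually_at_top_linorder by blast
    qed
    then have "\<forall>t\<ge>0. T t x \<eta> \<le> nat \<lfloor>l\<rfloor>"
      by (simp add: le_nat_floor)
    then show "\<exists>B. \<forall>t\<ge>0. T t x \<eta> \<le> B" ..
  qed
next
  assume bounded: "\<forall>x. \<exists>B. \<forall>t\<ge>0. T t x \<eta> \<le> B"
  show "finite_for T \<eta>" unfolding finite_for_def
  proof
    fix x
    obtain B where "\<And>t. 0 \<le> t \<Longrightarrow> T t x \<eta> \<le> B" using bounded by blast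
    then obtain t0 where "((\<lambda>t. real (T t x \<eta>)) \<longlongrightarrow> real (T t0 x \<eta>)) at_top"
      using bounded_toppling_count_converges[OF tp] by blast
    then show "\<exists>l. ((\<lambda>t. real (T t x \<eta>)) \<longlongrightarrow> l) at_top" ..
  qed
qed

lemma Tinf_attained:
  assumes tp: "toppling_procedure T" and "finite_for T \<eta>"
  obtains t0 where "0 \<le> t0" "Tinf T \<eta> x = real (T t0 x \<eta>)"
proof -
  obtain B where "\<And>t. 0 \<le> t \<Longrightarrow> T t x \<eta> \<le> B"
    using \<open>finite_for T \<eta>\<close> unfolding finite_for_iff_bounded[OF tp] by blast
  then obtain t0 where "0 \<le> t0" and lim: "((\<lambda>t. real (T t x \<eta>)) \<longlongrightarrow> real (T t0 x \<eta>)) at_top"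
    using bounded_toppling_count_converges[OF tp] by blast
  have "Tinf T \<eta> x = real (T t0 x \<eta>)"
    unfolding Tinf_def using trivial_limit_at_top_linorder lim by (rule tendsto_Lim)
  with \<open>0 \<le> t0\<close> show ?thesis by (rule that)
qed

lemma finite_for_odometer:
  assumes "toppling_procedure T" and "finite_for T \<eta>"
  obtains N :: "'d::finite site \<Rightarrow> nat"
  where "Tinf T \<eta> = (\<lambda>x. real (N x))" "\<And>x. \<exists>t\<ge>0. T t x \<eta> = N x"
proof -
  have "\<forall>x. \<exists>t. 0 \<le> t \<and> Tinf T \<eta> x = real (T t x \<eta>)"
    using Tinf_attained[OF assms] by metis
  then obtain t where t: "\<And>x. 0 \<le> t x \<and> Tinf T \<eta> x = real (T (t x) x \<eta>)" by metis
  show ?thesis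
  proof (rule that[of "\<lambda>x. T (t x) x \<eta>"])
    show "Tinf T \<eta> = (\<lambda>x. real (T (t x) x \<eta>))" using t by blast
    show "\<exists>s\<ge>0. T s x \<eta> = T (t x) x \<eta>" for x using t by blast
  qed
qed

lemma stabilizing_odometer:
  assumes "toppling_procedure T" and "stabilizing T \<eta>"
  obtains N :: "'d::finite site \<Rightarrow> nat"
  where "Tinf T \<eta> = (\<lambda>x. real (N x))" "\<And>x. \<exists>t\<ge>0. T t x \<eta> = N x"
    and "stable (\<lambda>y. real (\<eta> y) - toppling_op (\<lambda>z. real (N z)) y)"
proof -
  obtain N where N: "Tinf T \<eta> = (\<lambda>x. real (N x))" "\<And>x. \<exists>t\<ge>0. T t x \<eta> = N x"
    using finite_for_odometer assms unfolding stabilizing_def by blast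
  moreover have "stable (\<lambda>y. real (\<eta> y) - toppling_op (\<lambda>z. real (N z)) y)"
    using \<open>stabilizing T \<eta>\<close> unfolding stabilizing_def conf_inf_def[abs_def] N(1) by simp
  ultimately show ?thesis by (intro that)
qed

lemma Tinf_le_stabilizing:
  assumes "toppling_procedure S" "legal S" "finite_for S \<eta>"
    and "toppling_procedure T" "stabilizing T \<eta>"
  shows "Tinf S \<eta> x \<le> Tinf T \<eta> x"
proof -
  obtain N where N: "Tinf T \<eta> = (\<lambda>x. real (N x))"
    and stable: "stable (\<lambda>y. real (\<eta> y) - toppling_op (\<lambda>z. real (N z)) y)"
    using stabilizing_odometer[OF assms(4,5)] by metis
  obtain M where M: "Tinf S \<eta> = (\<lambda>x. real (M x))" "\<exists>t\<ge>0. S t x \<eta> = M x"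
    using finite_for_odometer[OF assms(1,3)] by metis
  then have "M x \<le> N x" using least_action[OF assms(1,2) stable] by metis
  with M(1) N show ?thesis by simp
qed

lemma stabilizable_imp_finite_for:
  assumes "stabilizable \<eta>" "toppling_procedure S" "legal S"
  shows "finite_for S \<eta>"
proof -
  obtain T where "toppling_procedure T" "stabilizing T \<eta>"
    using \<open>stabilizable \<eta>\<close> unfolding stabilizable_def by blast
  then obtain N where "stable (\<lambda>y. real (\<eta> y) - toppling_op (\<lambda>z. real (N z)) y)"
    by (rule stabilizing_odometer)
  then show ?thesis
    using least_action[OF assms(2,3)] finite_for_iff_bounded[OF assms(2)] by blast
qed

lemma stabilizing_Tinf_zero:
  assumes "toppling_procedure T" "stabilizing T \<eta>"
  shows "\<exists>x. Tinf T \<eta> x = 0"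
proof -
  obtain N where N: "Tinf T \<eta> = (\<lambda>x. real (N x))" "\<And>x. \<exists>t\<ge>0. T t x \<eta> = N x"
    and stable: "stable (\<lambda>y. real (\<eta> y) - toppling_op (\<lambda>z. real (N z)) y)"
    using stabilizing_odometer[OF assms] by blast
  have "\<exists>x. N x = 0"
  proof (rule ccontr)
    assume "\<nexists>x. N x = 0"
    then have pos: "\<And>y. 1 \<le> N y" by (simp add: Suc_le_eq)
    have "legal T" using \<open>stabilizing T \<eta>\<close> unfolding stabilizing_def by blast
    have "T t x \<eta> < N x" if "0 \<le> t" for t x
      using legal_never_reaches_positive_stabilizer[OF assms(1) \<open>legal T\<close> stable pos that] .
    then show False using N(2) by (metis less_irrefl)
  qed
  with N(1) show ?thesis by simp
qed

theorem theorem2p8: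
  fixes \<eta> :: "('d::finite) config" and T T' :: "'d procedure"
  assumes "toppling_procedure T" and "toppling_procedure T'"
    and "legal T" and "legal T'"
    and "finite_for T \<eta>" and "finite_for T' \<eta>"
  shows "(stabilizing T \<eta> \<longrightarrow> (\<forall>x. Tinf T' \<eta> x \<le> Tinf T \<eta> x))
       \<and> (stabilizing T \<eta> \<and> stabilizing T' \<eta> \<longrightarrow>
            (\<forall>x. Tinf T' \<eta> x = Tinf T \<eta> x) \<and> conf_inf T' \<eta> = conf_inf T \<eta>)
       \<and> (stabilizable \<eta> \<longrightarrow>
            \<not> (\<exists>S. toppling_procedure S \<and> legal S \<and> \<not> finite_for S \<eta>))
       \<and> (stabilizing T \<eta> \<longrightarrow> (\<exists>x. Tinf T \<eta> x = 0))"
proof (intro conjI impI allI)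
  show "Tinf T' \<eta> x \<le> Tinf T \<eta> x" if "stabilizing T \<eta>" for x
    using Tinf_le_stabilizing[OF assms(2,4,6,1) that] .
  assume "stabilizing T \<eta> \<and> stabilizing T' \<eta>"
  then have "Tinf T' \<eta> = Tinf T \<eta>"
    using Tinf_le_stabilizing[OF assms(2,4,6,1)] Tinf_le_stabilizing[OF assms(1,3,5,2)]
    by (intro ext order_antisym) auto
  then show "Tinf T' \<eta> x = Tinf T \<eta> x" and "conf_inf T' \<eta> = conf_inf T \<eta>" for x
    by (simp_all add: conf_inf_def[abs_def])
next
  show "\<not> (\<exists>S. toppling_procedure S \<and> legal S \<and> \<not> finite_for S \<eta>)" if "stabilizable \<eta>"
    using stabilizable_imp_finite_for[OF that] by blast
  show "\<exists>x. Tinf T \<eta> x = 0" if "stabilizing T \<eta>"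
    using stabilizing_Tinf_zero[OF assms(1) that] .
qed

end
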